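(* Let $A$ be a left brace and let $a\in\zeta_2(\star,A)$ be an element of infinite order in $(A,+)$. Let $c=a\star a$. If $c$ has infinite order in $(A,+)$, then the subbrace $\mathbf{br}(2a)$ generated by $2a$ is not an ideal of $A$.
   Context: A left brace is a set $A$ with two operations $+$ and $\cdot$ such that $(A,+)$ is an abelian group, $(A,\cdot)$ is a group, and $a(b+c)=ab+ac-a$ for all $a,b,c\in A$. Put $a\star b=ab-a-b$. A subbrace is a subset which is a subgroup of both $(A,+)$ and $(A,\cdot)$; $\mathbf{br}(x)$ is the intersection of all subbraces containing $x$. A subbrace $L$ is an ideal if $a\star z, z\star a\in L$ for all $a\in A$, $z\in L$. The $\star$-center is $\zeta(\star,A)=\{a: a\star x=x\star a=0\ \forall x\}$ (an ideal); $\zeta_2(\star,A)$ is given by $\zeta_2(\star,A)/\zeta(\star,A)=\zeta(\star,A/\zeta(\star,A))$. *)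

theory Defs
  imports "HOL-Algebra.Multiplicative_Group"
begin

text \<open>A left brace is represented on a whole type: the additive group is the
  type-class group \<open>('a, +)\<close>, and the multiplication is a separate operation \<open>m\<close>.\<close>

definition addgroup :: "('a::ab_group_add) monoid" where
  "addgroup = \<lparr>carrier = UNIV, mult = (+), one = 0\<rparr>"

definition mgroup :: "('a \<Rightarrow> 'a \<Rightarrow> 'a) \<Rightarrow> 'a monoid" where
  "mgroup m = \<lparr>carrier = UNIV, mult = m, one = (THE e. \<forall>x. m e x = x \<and> m x e = x)\<rparr>"

definition left_brace :: "('a::ab_group_add \<Rightarrow> 'a \<Rightarrow> 'a) \<Rightarrow> bool" where
  "left_brace m \<longleftrightarrow> group (mgroup m) \<and>
     (\<forall>a b c. m a (b + c) = m a b + m a c - a)"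

definition star :: "('a::ab_group_add \<Rightarrow> 'a \<Rightarrow> 'a) \<Rightarrow> 'a \<Rightarrow> 'a \<Rightarrow> 'a" where
  "star m a b = m a b - a - b"

definition subbrace :: "('a::ab_group_add \<Rightarrow> 'a \<Rightarrow> 'a) \<Rightarrow> 'a set \<Rightarrow> bool" where
  "subbrace m S \<longleftrightarrow> subgroup S addgroup \<and> subgroup S (mgroup m)"

definition br :: "('a::ab_group_add \<Rightarrow> 'a \<Rightarrow> 'a) \<Rightarrow> 'a \<Rightarrow> 'a set" where
  "br m x = \<Inter>{S. subbrace m S \<and> x \<in> S}"

definition brace_ideal :: "('a::ab_group_add \<Rightarrow> 'a \<Rightarrow> 'a) \<Rightarrow> 'a set \<Rightarrow> bool" where
  "brace_ideal m L \<longleftrightarrow> subbrace m L \<and> (\<forall>a z. z \<in> L \<longrightarrow> star m a z \<in> L \<and> star m z a \<in> L)"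

definition star_center :: "('a::ab_group_add \<Rightarrow> 'a \<Rightarrow> 'a) \<Rightarrow> 'a set" where
  "star_center m = {a. \<forall>x. star m a x = 0 \<and> star m x a = 0}"

text \<open>\<open>\<zeta>\<^sub>2\<close>: the preimage of the \<open>\<star>\<close>-center of \<open>A/\<zeta>\<close>; since \<open>(a+\<zeta>)\<star>(x+\<zeta>) = a\<star>x + \<zeta>\<close>
  in the quotient brace, this unfolds to the following.\<close>
definition star_center2 :: "('a::ab_group_add \<Rightarrow> 'a \<Rightarrow> 'a) \<Rightarrow> 'a set" where
  "star_center2 m = {a. \<forall>x. star m a x \<in> star_center m \<and> star m x a \<in> star_center m}"

end

theory Submission
  imports Defs
begin

text \<open>Inside \<open>\<zeta>\<^sub>2\<close> the element \<open>c = a \<star> a\<close> is \<open>\<star>\<close>-central, and one computes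
  \<open>(ia + jc) \<cdot> (pa + qc) = (i + p)a + (j + q + ip)c\<close>. Hence \<open>{2ia + 4jc}\<close> is a subbrace
  containing \<open>2a\<close>, so it contains \<open>br(2a)\<close>. If \<open>br(2a)\<close> were an ideal, it would contain
  \<open>a \<star> 2a = 2c\<close>; applying \<open>_ \<star> a\<close> to \<open>2c = 2ia + 4jc\<close> gives \<open>2ic = 0\<close>, so \<open>i = 0\<close>
  and \<open>(4j - 2)c = 0\<close>, which is impossible when \<open>c\<close> has infinite order.\<close>

lemma group_addgroup: "group (addgroup :: 'a::ab_group_add monoid)"
  unfolding addgroup_def by (rule groupI) (auto simp: add.assoc intro: exI[of _ "- _"])

lemma addgroup_simps [simp]:
  "carrier addgroup = UNIV" "one addgroup = 0" "mult addgroup x y = x + y"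
  by (simp_all add: addgroup_def)

lemma addgroup_inv [simp]: "inv\<^bsub>addgroup\<^esub> (x::'a::ab_group_add) = - x"
  by (rule group.inv_equality[OF group_addgroup]) auto

abbreviation int_mult :: "int \<Rightarrow> 'a::ab_group_add \<Rightarrow> 'a" where
  "int_mult i x \<equiv> x [^]\<^bsub>addgroup\<^esub> i"

lemma int_mult_zero_right [simp]: "int_mult i (0::'a::ab_group_add) = 0"
  using group.int_pow_one[OF group_addgroup] by simp

lemma int_mult_1 [simp]: "int_mult 1 x = x"
  using group.int_pow_1[OF group_addgroup] by simp

lemma int_mult_add: "int_mult (i + j) x = int_mult i x + int_mult j x"
  using group.int_pow_mult[OF group_addgroup] by simp

lemma int_mult_minus: "int_mult (- i) x = - int_mult i x"
  using group.int_pow_neg[OF group_addgroup] by simp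

lemma int_mult_mult: "int_mult (i * j) x = int_mult j (int_mult i x)"
  using group.int_pow_pow[OF group_addgroup, of x i j] by simp

lemma int_mult_additive:
  fixes f :: "'a::ab_group_add \<Rightarrow> 'b::ab_group_add"
  assumes "\<And>x y. f (x + y) = f x + f y"
  shows "f (int_mult i x) = int_mult i (f x)"
proof -
  have "f \<in> hom addgroup addgroup"
    using assms by (simp add: hom_def)
  then show ?thesis
    using hom_int_pow[OF _ _ group_addgroup group_addgroup] by simp
qed

lemma int_mult_inject:
  "group.ord addgroup x = 0 \<Longrightarrow> int_mult i x = int_mult j x \<longleftrightarrow> i = j"
  using group.int_pow_eq[OF group_addgroup, of x i j] by auto

lemma subgroup_addgroup_int_mult_closed:
  "subgroup H addgroup \<Longrightarrow> x \<in> H \<Longrightarrow> int_mult i x \<in> H"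
  by (rule group.subgroup_int_pow_closed[OF group_addgroup])

lemma mgroup_simps [simp]: "carrier (mgroup m) = UNIV" "mult (mgroup m) = m"
  by (simp_all add: mgroup_def)

lemma br_contains: "x \<in> br m x"
  by (simp add: br_def)

lemma br_least: "subbrace m S \<Longrightarrow> x \<in> S \<Longrightarrow> br m x \<subseteq> S"
  by (auto simp: br_def)

locale brace =
  fixes m :: "'a::ab_group_add \<Rightarrow> 'a \<Rightarrow> 'a"
  assumes left_brace: "left_brace m"
begin

lemma group_mgroup: "group (mgroup m)"
  using left_brace by (simp add: left_brace_def)

lemma mult_add_right: "m x (y + z) = m x y + m x z - x"
  using left_brace by (simp add: left_brace_def)

lemma mult_assoc: "m (m x y) z = m x (m y z)"
  using monoid.m_assoc[OF group.is_monoid[OF group_mgroup]] by simp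

lemma mult_0_right: "m x 0 = x"
  using mult_add_right[of x 0 0] by simp

lemma one_mgroup: "one (mgroup m) = 0"
  using monoid.l_one[OF group.is_monoid[OF group_mgroup], of 0] mult_0_right by simp

lemma mult_0_left: "m 0 x = x"
  using monoid.l_one[OF group.is_monoid[OF group_mgroup]] by (simp add: one_mgroup)

lemma mult_eq_add_star: "m x y = x + y + star m x y"
  by (simp add: star_def)

lemma star_0_left: "star m 0 y = 0"
  by (simp add: star_def mult_0_left)

lemma star_0_right: "star m x 0 = 0"
  by (simp add: star_def mult_0_right)

lemma star_add_right: "star m x (y + z) = star m x y + star m x z"
  by (simp add: star_def mult_add_right algebra_simps)

lemma star_int_mult_right: "star m x (int_mult i y) = int_mult i (star m x y)"
  by (rule int_mult_additive) (rule star_add_right)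

text \<open>Left \<open>\<star>\<close>-multiplication by a central \<open>z\<close> is trivial, so \<open>u + z = u \<cdot> z\<close> and
  \<open>(u \<cdot> z) \<cdot> y = u \<cdot> (z + y) = z + u \<cdot> y\<close>.\<close>
lemma star_add_center_left:
  assumes "z \<in> star_center m"
  shows "star m (u + z) y = star m u y"
proof -
  have uz: "m u z = u + z" and zy: "m z y = z + y"
    using assms by (auto simp: star_center_def star_def algebra_simps)
  have "m (u + z) y = m u (m z y)"
    using mult_assoc[of u z y] uz by simp
  also have "\<dots> = z + m u y"
    using zy uz by (simp add: mult_add_right)
  finally show ?thesis
    by (simp add: star_def)
qed

lemma subgroup_star_center: "subgroup (star_center m) addgroup"
proof (rule group.subgroupI[OF group_addgroup])
  show "star_center m \<noteq> {}"
    using star_0_left star_0_right by (auto simp: star_center_def)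
next
  fix z assume z: "z \<in> star_center m"
  have "star m (- z) y = 0" for y
    using star_add_center_left[OF z, of "- z" y] by (simp add: star_0_left)
  moreover have "star m y (- z) = 0" for y
    using z star_add_right[of y "- z" z] by (simp add: star_center_def star_0_right)
  ultimately show "inv\<^bsub>addgroup\<^esub> z \<in> star_center m"
    by (simp add: star_center_def)
next
  fix z w assume "z \<in> star_center m" "w \<in> star_center m"
  then show "z \<otimes>\<^bsub>addgroup\<^esub> w \<in> star_center m"
    using star_add_center_left[of w z] star_add_right by (simp add: star_center_def)
qed simp

lemma star_center_int_mult: "z \<in> star_center m \<Longrightarrow> int_mult i z \<in> star_center m"
  by (rule subgroup_addgroup_int_mult_closed[OF subgroup_star_center])

end

locale brace_zeta2 = brace +
  fixes a :: "'a::ab_group_add"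
  assumes a_in_zeta2: "a \<in> star_center2 m"
begin

abbreviation c :: 'a where
  "c \<equiv> star m a a"

lemma c_in_star_center: "c \<in> star_center m"
  using a_in_zeta2 by (simp add: star_center2_def)

text \<open>As \<open>u \<star> a\<close> is central, \<open>(u + a) \<star> a = (u \<cdot> a) \<star> a\<close>, and associativity
  turns \<open>(u \<cdot> a) \<cdot> a\<close> into \<open>u \<cdot> (a \<cdot> a) = u \<cdot> (2a + c)\<close>.\<close>
lemma star_add_a_left: "star m (u + a) a = star m u a + c"
proof -
  define s where "s = star m u a"
  have s: "s \<in> star_center m"
    using a_in_zeta2 by (simp add: star_center2_def s_def)
  have ua: "m u a = u + a + s"
    by (simp add: s_def star_def)
  have uc: "m u c = u + c"
    using c_in_star_center by (simp add: star_center_def star_def algebra_simps)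
  have "star m (u + a) a = star m (u + a + s) a"
    using star_add_center_left[OF s] by simp
  also have "\<dots> = m u (m a a) - (u + a + s) - a"
    using mult_assoc[of u a a] ua by (simp add: star_def)
  also have "m u (m a a) = m u (a + a + c)"
    by (simp add: star_def)
  finally show ?thesis
    using ua uc by (simp add: mult_add_right s_def algebra_simps)
qed

lemma star_int_mult_a_left: "star m (int_mult i a) a = int_mult i c"
proof (induction i rule: int_induct[where k = 0])
  case base
  then show ?case
    by (simp add: star_0_left)
next
  case (step1 i)
  then show ?case
    by (simp add: int_mult_add star_add_a_left)
next
  case (step2 i)
  then show ?case
    using star_add_a_left[of "int_mult (i - 1) a"] int_mult_add[of a "i - 1" 1]
      int_mult_add[of c "i - 1" 1]
    by simp
qed

lemma star_combination:
  "star m (int_mult i a + int_mult j c) (int_mult p a + int_mult q c) = int_mult (i * p) c"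
proof -
  have "star m x c = 0" for x
    using c_in_star_center by (simp add: star_center_def)
  then have "star m x (int_mult p a + int_mult q c) = int_mult p (star m x a)" for x
    by (simp add: star_add_right star_int_mult_right)
  moreover have "star m (int_mult i a + int_mult j c) a = int_mult i c"
    using star_add_center_left[OF star_center_int_mult[OF c_in_star_center]] star_int_mult_a_left
    by simp
  ultimately show ?thesis
    by (simp add: int_mult_mult mult.commute)
qed

lemma mult_combination:
  "m (int_mult i a + int_mult j c) (int_mult p a + int_mult q c)
     = int_mult (i + p) a + int_mult (j + q + i * p) c"
  by (simp add: mult_eq_add_star star_combination int_mult_add algebra_simps)

lemma combination_inject:
  assumes "group.ord addgroup c = 0"
    and "int_mult i a + int_mult j c = int_mult p a + int_mult q c"
  shows "i = p \<and> j = q"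
proof -
  have "int_mult i c = int_mult p c"
    using star_combination[of i j 1 0] star_combination[of p q 1 0] assms(2) by simp
  then have "i = p"
    using int_mult_inject[OF assms(1)] by blast
  then show ?thesis
    using assms(2) int_mult_inject[OF assms(1)] by simp
qed

definition lattice_2a_4c :: "'a set" where
  "lattice_2a_4c = {int_mult (2 * i) a + int_mult (4 * j) c | i j. True}"

lemma subgroup_addgroup_lattice_2a_4c: "subgroup lattice_2a_4c addgroup"
proof (rule group.subgroupI[OF group_addgroup])
  show "lattice_2a_4c \<noteq> {}"
    by (auto simp: lattice_2a_4c_def)
next
  fix x assume "x \<in> lattice_2a_4c"
  then obtain i j where "x = int_mult (2 * i) a + int_mult (4 * j) c"
    by (auto simp: lattice_2a_4c_def)
  then have "inv\<^bsub>addgroup\<^esub> x = int_mult (2 * - i) a + int_mult (4 * - j) c"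
    by (simp add: int_mult_minus)
  then show "inv\<^bsub>addgroup\<^esub> x \<in> lattice_2a_4c"
    unfolding lattice_2a_4c_def by blast
next
  fix x y assume "x \<in> lattice_2a_4c" "y \<in> lattice_2a_4c"
  then obtain i j p q where "x = int_mult (2 * i) a + int_mult (4 * j) c"
    and "y = int_mult (2 * p) a + int_mult (4 * q) c"
    by (auto simp: lattice_2a_4c_def)
  then have "x \<otimes>\<^bsub>addgroup\<^esub> y = int_mult (2 * (i + p)) a + int_mult (4 * (j + q)) c"
    by (simp add: int_mult_add algebra_simps)
  then show "x \<otimes>\<^bsub>addgroup\<^esub> y \<in> lattice_2a_4c"
    unfolding lattice_2a_4c_def by blast
qed simp

text \<open>Closure under \<open>\<cdot>\<close> is where the coefficient \<open>4\<close> comes from: in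
  \<open>mult_combination\<close> the cross term \<open>(2i)(2p) c\<close> is a multiple of \<open>4c\<close>.\<close>
lemma subgroup_mgroup_lattice_2a_4c: "subgroup lattice_2a_4c (mgroup m)"
proof (rule group.subgroupI[OF group_mgroup])
  show "lattice_2a_4c \<noteq> {}"
    by (auto simp: lattice_2a_4c_def)
next
  fix x assume "x \<in> lattice_2a_4c"
  then obtain i j where x: "x = int_mult (2 * i) a + int_mult (4 * j) c"
    by (auto simp: lattice_2a_4c_def)
  define y where "y = int_mult (2 * - i) a + int_mult (4 * (i * i - j)) c"
  have "m y x = \<one>\<^bsub>mgroup m\<^esub>"
    unfolding x y_def mult_combination one_mgroup by (simp add: algebra_simps)
  then have "inv\<^bsub>mgroup m\<^esub> x = y"
    by (intro group.inv_equality[OF group_mgroup]) simp_all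
  then show "inv\<^bsub>mgroup m\<^esub> x \<in> lattice_2a_4c"
    unfolding lattice_2a_4c_def y_def by blast
next
  fix x y assume "x \<in> lattice_2a_4c" "y \<in> lattice_2a_4c"
  then obtain i j p q where "x = int_mult (2 * i) a + int_mult (4 * j) c"
    and "y = int_mult (2 * p) a + int_mult (4 * q) c"
    by (auto simp: lattice_2a_4c_def)
  then have "x \<otimes>\<^bsub>mgroup m\<^esub> y = int_mult (2 * (i + p)) a + int_mult (4 * (j + q + i * p)) c"
    by (simp add: mult_combination algebra_simps)
  then show "x \<otimes>\<^bsub>mgroup m\<^esub> y \<in> lattice_2a_4c"
    unfolding lattice_2a_4c_def by blast
qed simp

lemma br_double_subset_lattice_2a_4c: "br m (a + a) \<subseteq> lattice_2a_4c"
proof (rule br_least)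
  show "subbrace m lattice_2a_4c"
    by (simp add: subbrace_def subgroup_addgroup_lattice_2a_4c subgroup_mgroup_lattice_2a_4c)
  have "a + a = int_mult (2 * 1) a + int_mult (4 * 0) c"
    using int_mult_add[of a 1 1] by simp
  then show "a + a \<in> lattice_2a_4c"
    unfolding lattice_2a_4c_def by blast
qed

lemma double_c_notin_lattice_2a_4c:
  assumes "group.ord addgroup c = 0"
  shows "c + c \<notin> lattice_2a_4c"
proof
  assume "c + c \<in> lattice_2a_4c"
  then obtain i j where "int_mult 0 a + int_mult 2 c = int_mult (2 * i) a + int_mult (4 * j) c"
    using int_mult_add[of c 1 1] by (auto simp: lattice_2a_4c_def)
  then have "2 = 4 * j"
    using combination_inject[OF assms] by blast
  then show False
    by presburger
qed

end

theorem lemma3p7: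
  fixes m :: "'a::ab_group_add \<Rightarrow> 'a \<Rightarrow> 'a" and a :: 'a
  assumes "left_brace m"
    and "a \<in> star_center2 m"
    and "group.ord addgroup a = 0"
    and "group.ord addgroup (star m a a) = 0"
  shows "\<not> brace_ideal m (br m (a + a))"
proof
  interpret brace_zeta2 m a
    using assms(1,2) by unfold_locales
  assume "brace_ideal m (br m (a + a))"
  then have "star m a (a + a) \<in> br m (a + a)"
    using br_contains by (auto simp: brace_ideal_def)
  then have "c + c \<in> lattice_2a_4c"
    using br_double_subset_lattice_2a_4c by (auto simp: star_add_right)
  then show False
    using double_c_notin_lattice_2a_4c[OF assms(4)] by blast
qed

end
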